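(* Let $(V,\nu)$ and $(W,\mu)$ be strongly complete PN-spaces and let $T\in B(V,W)$ be bijective. Then the inverse $T^{-1}:W\to V$ belongs to $B(W,V)$, i.e. it is a linear operator continuous for the strong topologies.
   Context: A distance distribution function is a map $F:[-\infty,+\infty]\to[0,1]$ that is nondecreasing, left-continuous on $\mathbb{R}$, with $F(-\infty)=0$, $F(+\infty)=1$ and $F(0)=0$; the set of these is $\Delta^+$. $\mathcal{D}^+\subseteq\Delta^+$ denotes the proper ones, i.e. those with $\lim_{x\to+\infty}F(x)=1$. $H_0\in\Delta^+$ is $H_0(x)=0$ for $x\le 0$ and $H_0(x)=1$ for $x>0$. For $F,G\in\Delta^+$ let $\tau_M(F,G)(x)=\sup\{\min(F(s),G(t)) : s+t=x\}$. In this paper a PN-space $(V,\nu)$ is a real vector space $V$ with a map $\nu:V\to\Delta^+$, $p\mapsto\nu_p$, such that for all $p,q\in V$: $\nu_p=H_0$ iff $p=0$; $\nu_{p+q}\ge\tau_M(\nu_p,\nu_q)$ pointwise; and $\nu_{\alpha p}(x)=\nu_p(x/|\alpha|)$ for all real $\alpha\neq0$ and $x\ge 0$. Standing assumption: $\nu_p\in\mathcal{D}^+$ for every $p\in V$. For $x\in V$ and $w\in(0,1)$ put $\|x\|_w=\sup\{t\in\mathbb{R}:\nu_x(t)<w\}$; for each $w$ this is a norm on $V$, and $w\mapsto\|x\|_w$ is nondecreasing. For $p\in V$, $r>0$, $w\in(0,1)$ put $B_w(p;r)=\{x\in V:\|x-p\|_w<r\}$. The strong topology on $V$ is generated by the neighbourhoods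 $N_p(t)=\{q\in V:\nu_{p-q}(t)>1-t\}$, $p\in V$, $t>0$; equivalently the family $\{B_w(p;r)\}$ is a basis for it. A sequence $(p_n)$ converges strongly to $p$ if for every $t>0$ one has $p_n\in N_p(t)$ for all large $n$; it is strongly Cauchy if for every $t>0$ there is $N$ with $\nu_{p_n-p_m}(t)>1-t$ for all $m,n>N$. $(V,\nu)$ is strongly complete if every strongly Cauchy sequence converges strongly. $B(V,W)$ denotes the set of linear operators $V\to W$ that are continuous for the strong topologies. *)

theory Defs
  imports "HOL-Analysis.Analysis"
begin

text \<open>Distance distribution functions, represented as maps from the extended reals to the reals.\<close>

definition ddf :: "(ereal \<Rightarrow> real) \<Rightarrow> bool" where
  "ddf F \<longleftrightarrow> (\<forall>x. 0 \<le> F x \<and> F x \<le> 1) \<and> mono F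
     \<and> (\<forall>x::real. ((\<lambda>y. F (ereal y)) \<longlongrightarrow> F (ereal x)) (at_left x))
     \<and> F (-\<infinity>) = 0 \<and> F \<infinity> = 1 \<and> F 0 = 0"

definition proper_ddf :: "(ereal \<Rightarrow> real) \<Rightarrow> bool" where
  "proper_ddf F \<longleftrightarrow> ddf F \<and> ((\<lambda>x. F (ereal x)) \<longlongrightarrow> 1) at_top"

definition H0 :: "ereal \<Rightarrow> real" where
  "H0 x = (if x \<le> 0 then 0 else 1)"

text \<open>tau_M(F,G)(x) for real x (at x = +/-infinity the triangle inequality is automatic).\<close>
definition tauM :: "(ereal \<Rightarrow> real) \<Rightarrow> (ereal \<Rightarrow> real) \<Rightarrow> real \<Rightarrow> real" where
  "tauM F G x = (SUP s::real. min (F (ereal s)) (G (ereal (x - s))))"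

definition PN_space :: "('a::real_vector \<Rightarrow> ereal \<Rightarrow> real) \<Rightarrow> bool" where
  "PN_space \<nu> \<longleftrightarrow>
     (\<forall>p. ddf (\<nu> p)) \<and>
     (\<forall>p. \<nu> p = H0 \<longleftrightarrow> p = 0) \<and>
     (\<forall>p q. \<forall>x::real. \<nu> (p + q) (ereal x) \<ge> tauM (\<nu> p) (\<nu> q) x) \<and>
     (\<forall>p (\<alpha>::real) (x::real). \<alpha> \<noteq> 0 \<and> x \<ge> 0 \<longrightarrow>
        \<nu> (\<alpha> *\<^sub>R p) (ereal x) = \<nu> p (ereal (x / \<bar>\<alpha>\<bar>)))"

definition proper_PN_space :: "('a::real_vector \<Rightarrow> ereal \<Rightarrow> real) \<Rightarrow> bool" where
  "proper_PN_space \<nu> \<longleftrightarrow> PN_space \<nu> \<and> (\<forall>p. proper_ddf (\<nu> p))"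

definition strong_nbhd :: "('a::real_vector \<Rightarrow> ereal \<Rightarrow> real) \<Rightarrow> 'a \<Rightarrow> real \<Rightarrow> 'a set" where
  "strong_nbhd \<nu> p t = {q. \<nu> (p - q) (ereal t) > 1 - t}"

definition strong_top :: "('a::real_vector \<Rightarrow> ereal \<Rightarrow> real) \<Rightarrow> 'a topology" where
  "strong_top \<nu> = topology (\<lambda>U. \<forall>p\<in>U. \<exists>t>0. strong_nbhd \<nu> p t \<subseteq> U)"

definition strong_conv :: "('a::real_vector \<Rightarrow> ereal \<Rightarrow> real) \<Rightarrow> (nat \<Rightarrow> 'a) \<Rightarrow> 'a \<Rightarrow> bool" where
  "strong_conv \<nu> s p \<longleftrightarrow> (\<forall>t>0. \<exists>N. \<forall>n\<ge>N. s n \<in> strong_nbhd \<nu> p t)"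

definition strong_Cauchy :: "('a::real_vector \<Rightarrow> ereal \<Rightarrow> real) \<Rightarrow> (nat \<Rightarrow> 'a) \<Rightarrow> bool" where
  "strong_Cauchy \<nu> s \<longleftrightarrow> (\<forall>t>0. \<exists>N. \<forall>m>N. \<forall>n>N. \<nu> (s n - s m) (ereal t) > 1 - t)"

definition strongly_complete :: "('a::real_vector \<Rightarrow> ereal \<Rightarrow> real) \<Rightarrow> bool" where
  "strongly_complete \<nu> \<longleftrightarrow> (\<forall>s. strong_Cauchy \<nu> s \<longrightarrow> (\<exists>p. strong_conv \<nu> s p))"

definition bounded_ops ::
  "('a::real_vector \<Rightarrow> ereal \<Rightarrow> real) \<Rightarrow> ('b::real_vector \<Rightarrow> ereal \<Rightarrow> real) \<Rightarrow> ('a \<Rightarrow> 'b) set" where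
  "bounded_ops \<nu> \<mu> = {T. linear T \<and> continuous_map (strong_top \<nu>) (strong_top \<mu>) T}"

end

theory Submission
  imports Defs
begin

text \<open>
  The map \<open>fnorm \<nu> x = inf {t > 0. \<nu>\<^sub>x(t) > 1 - t}\<close> is an F-norm: it is subadditive,
  vanishes only at 0, does not increase under scalars of modulus at most 1, and
  \<open>fnorm \<nu> (x / n) \<rightarrow> 0\<close> because \<open>\<nu>\<^sub>x\<close> is proper. Its balls are sandwiched between the strong
  neighbourhoods, so the strong topology is the topology of the metric \<open>fnorm \<nu> (p - q)\<close> and
  strong completeness is metric completeness. The theorem thereby becomes Banach's inverse
  mapping theorem for complete F-normed spaces. By the Baire category theorem the closure of
  the image of every ball contains a ball around 0; successive approximation, summing
  corrections whose sizes decrease geometrically, then shows that the image of every ball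
  itself contains a ball around 0, which is continuity of the inverse at 0.
\<close>

section \<open>F-normed spaces\<close>

locale fnormed_space =
  fixes N :: "'a::real_vector \<Rightarrow> real"
  assumes N_nonneg: "0 \<le> N x"
    and N_eq_0_iff: "N x = 0 \<longleftrightarrow> x = 0"
    and N_triangle: "N (x + y) \<le> N x + N y"
    and N_scaleR_le: "\<bar>c\<bar> \<le> 1 \<Longrightarrow> N (c *\<^sub>R x) \<le> N x"
    and N_divideR_tendsto_0: "(\<lambda>n. N (x /\<^sub>R real n)) \<longlonglongrightarrow> 0"
begin

lemma N_0 [simp]: "N 0 = 0"
  using N_eq_0_iff by simp

lemma N_minus [simp]: "N (- x) = N x"
  using N_scaleR_le[of "-1" x] N_scaleR_le[of "-1" "- x"] by simp

lemma N_diff_commute: "N (x - y) = N (y - x)"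
  by (metis N_minus minus_diff_eq)

lemma N_diff_triangle: "N (x - z) \<le> N (x - y) + N (y - z)"
  using N_triangle[of "x - y" "y - z"] by simp

lemma N_sum_le: "N (sum f A) \<le> (\<Sum>i\<in>A. N (f i))"
proof (induction A rule: infinite_finite_induct)
  case (insert a A)
  then show ?case
    using N_triangle[of "f a" "sum f A"] by simp
qed simp_all

lemma N_of_nat_scaleR_le: "N (real k *\<^sub>R x) \<le> real k * N x"
  using N_sum_le[of "\<lambda>_. x" "{..<k}"] by (simp add: sum_constant_scaleR)

end

sublocale fnormed_space \<subseteq> Metric_space UNIV "\<lambda>x y. N (x - y)"
  by unfold_locales (auto simp: N_nonneg N_eq_0_iff N_diff_commute N_diff_triangle)

context fnormed_space
begin

lemma continuous_map_scaleR:
  assumes "\<bar>c\<bar> \<le> 1"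
  shows "continuous_map mtopology mtopology (\<lambda>x. c *\<^sub>R x)"
proof -
  have "N (c *\<^sub>R a - c *\<^sub>R x) < \<epsilon>" if "N (a - x) < \<epsilon>" for a x \<epsilon>
    using N_scaleR_le[OF assms, of "a - x"] that by (simp add: scaleR_diff_right)
  then show ?thesis
    unfolding metric_continuous_map[OF Metric_space_axioms] by (metis UNIV_I image_subset_iff)
qed

lemma mball_0 [simp]: "mball 0 r = {x. N x < r}"
  by auto

lemma MCauchy_partial_sums:
  assumes summable: "summable (\<lambda>i. N (x i))"
  shows "MCauchy (\<lambda>n. \<Sum>i<n. x i)"
  unfolding MCauchy_def
proof (intro conjI allI impI)
  fix \<epsilon> :: real assume "0 < \<epsilon>"
  then obtain M where M: "\<And>m n. M \<le> m \<Longrightarrow> \<bar>\<Sum>i\<in>{m..<n}. N (x i)\<bar> < \<epsilon>"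
    using summable unfolding summable_Cauchy real_norm_def by blast
  have ordered: "N ((\<Sum>i<n. x i) - (\<Sum>i<m. x i)) < \<epsilon>" if "M \<le> m" "m \<le> n" for m n
  proof -
    have "N ((\<Sum>i<n. x i) - (\<Sum>i<m. x i)) \<le> (\<Sum>i\<in>{m..<n}. N (x i))"
      using N_sum_le[of x "{m..<n}"] \<open>m \<le> n\<close>
      by (simp add: sum_diff_nat_ivl[of 0, symmetric] atLeast0LessThan)
    then show ?thesis
      using M[OF \<open>M \<le> m\<close>, of n] abs_ge_self[of "\<Sum>i\<in>{m..<n}. N (x i)"] by linarith
  qed
  have "N ((\<Sum>i<n. x i) - (\<Sum>i<m. x i)) < \<epsilon>" if "M \<le> m" "M \<le> n" for m n
  proof (cases "m \<le> n")
    case False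
    have "N ((\<Sum>i<n. x i) - (\<Sum>i<m. x i)) = N ((\<Sum>i<m. x i) - (\<Sum>i<n. x i))"
      by (rule N_diff_commute)
    also have "\<dots> < \<epsilon>"
      using ordered[of n m] that False by simp
    finally show ?thesis .
  qed (use ordered that in simp)
  then show "\<exists>M. \<forall>n m. M \<le> n \<longrightarrow> M \<le> m \<longrightarrow> N ((\<Sum>i<n. x i) - (\<Sum>i<m. x i)) < \<epsilon>"
    by blast
qed simp

lemma summable_N_imp_limitin:
  assumes "mcomplete" and summable: "summable (\<lambda>i. N (x i))"
  shows "\<exists>s. limitin mtopology (\<lambda>n. \<Sum>i<n. x i) s sequentially \<and> N s \<le> (\<Sum>i. N (x i))"
proof -
  obtain s where lim: "limitin mtopology (\<lambda>n. \<Sum>i<n. x i) s sequentially"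
    using \<open>mcomplete\<close> MCauchy_partial_sums[OF summable] unfolding mcomplete_def by blast
  have "N s \<le> (\<Sum>i. N (x i)) + \<epsilon>" if "0 < \<epsilon>" for \<epsilon>
  proof -
    have "\<forall>\<^sub>F n in sequentially. N ((\<Sum>i<n. x i) - s) < \<epsilon>"
      using lim that unfolding limitin_metric by simp
    then obtain n where n: "N ((\<Sum>i<n. x i) - s) < \<epsilon>"
      unfolding eventually_sequentially by blast
    have "N s \<le> N (\<Sum>i<n. x i) + N (s - (\<Sum>i<n. x i))"
      using N_triangle[of "\<Sum>i<n. x i" "s - (\<Sum>i<n. x i)"] by simp
    also have "N (s - (\<Sum>i<n. x i)) = N ((\<Sum>i<n. x i) - s)"
      by (rule N_diff_commute)
    also have "N (\<Sum>i<n. x i) \<le> (\<Sum>i<n. N (x i))"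
      by (rule N_sum_le)
    also have "(\<Sum>i<n. N (x i)) \<le> (\<Sum>i. N (x i))"
      using summable by (intro sum_le_suminf) (auto simp: N_nonneg)
    finally show ?thesis
      using n by simp
  qed
  then have "N s \<le> (\<Sum>i. N (x i))"
    by (rule field_le_epsilon)
  with lim show ?thesis
    by blast
qed

lemma limitin_if_steps_sums:
  assumes "mcomplete" and "s 0 = 0"
    and steps: "\<And>n. N (s (Suc n) - s n) \<le> \<rho> n" and "\<rho> sums R"
  shows "\<exists>x. limitin mtopology s x sequentially \<and> N x \<le> R"
proof -
  have "summable \<rho>" and "suminf \<rho> = R"
    using \<open>\<rho> sums R\<close> by (simp_all add: sums_iff)
  have summable: "summable (\<lambda>n. N (s (Suc n) - s n))"
    by (rule summable_comparison_test'[OF \<open>summable \<rho>\<close>]) (simp add: N_nonneg steps)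
  have "(\<Sum>n. N (s (Suc n) - s n)) \<le> R"
    using suminf_le[OF steps summable \<open>summable \<rho>\<close>] \<open>suminf \<rho> = R\<close> by simp
  moreover have "(\<lambda>n. \<Sum>i<n. s (Suc i) - s i) = s"
    using \<open>s 0 = 0\<close> by (simp add: sum_lessThan_telescope)
  moreover obtain x where "limitin mtopology (\<lambda>n. \<Sum>i<n. s (Suc i) - s i) x sequentially"
    and "N x \<le> (\<Sum>n. N (s (Suc n) - s n))"
    using summable_N_imp_limitin[OF \<open>mcomplete\<close> summable] by blast
  ultimately show ?thesis
    by auto
qed

lemma limitin_if_N_diff_less_inverse:
  assumes "\<And>n. N (y - s n) < inverse (real (Suc n))"
  shows "limitin mtopology s y sequentially"
  unfolding limitin_metric
proof (intro conjI allI impI UNIV_I)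
  fix \<epsilon> :: real assume "0 < \<epsilon>"
  then have "\<forall>\<^sub>F n in sequentially. inverse (real (Suc n)) < \<epsilon>"
    using LIMSEQ_inverse_real_of_nat by (rule order_tendstoD(2)[rotated])
  then show "\<forall>\<^sub>F n in sequentially. s n \<in> UNIV \<and> N (s n - y) < \<epsilon>"
  proof (rule eventually_mono)
    fix n assume "inverse (real (Suc n)) < \<epsilon>"
    moreover have "N (s n - y) = N (y - s n)"
      by (rule N_diff_commute)
    ultimately show "s n \<in> UNIV \<and> N (s n - y) < \<epsilon>"
      using assms[of n] by simp
  qed
qed

end

section \<open>The inverse mapping theorem in complete F-normed spaces\<close>

lemma linear_inv:
  assumes lin: "linear f" and "bij f"
  shows "linear (inv f)"
proof -
  have f_inv: "f (inv f y) = y" and inv_f: "inv f (f x) = x" for x y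
    using \<open>bij f\<close> by (simp_all add: bij_is_surj bij_is_inj surj_f_inv_f)
  show ?thesis
  proof (rule linearI)
    show "inv f (a + b) = inv f a + inv f b" for a b
      using inv_f[of "inv f a + inv f b"] by (simp add: linear_add[OF lin] f_inv)
    show "inv f (c *\<^sub>R a) = c *\<^sub>R inv f a" for c a
      using inv_f[of "c *\<^sub>R inv f a"] by (simp add: linear_scale[OF lin] f_inv)
  qed
qed

lemma (in Metric_space) Baire_exists_mball_subset:
  fixes F :: "nat \<Rightarrow> 'a set"
  assumes "mcomplete" and closed: "\<And>n. closedin mtopology (F n)" and cover: "(\<Union>n. F n) = M"
    and "M \<noteq> {}"
  shows "\<exists>n x r. x \<in> M \<and> 0 < r \<and> mball x r \<subseteq> F n"
proof -
  have "\<exists>n. mtopology interior_of F n \<noteq> {}"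
  proof (rule ccontr)
    assume "\<nexists>n. mtopology interior_of F n \<noteq> {}"
    then have "mtopology interior_of (\<Union>(range F)) = {}"
      using closed by (intro metric_Baire_category_alt[OF \<open>mcomplete\<close>]) auto
    then show False
      using cover \<open>M \<noteq> {}\<close> interior_of_topspace[of mtopology] by simp
  qed
  then obtain n x where x: "x \<in> mtopology interior_of F n"
    by blast
  then have "x \<in> M"
    using interior_of_subset_topspace[of mtopology "F n"] by auto
  moreover obtain r where "0 < r" and "mball x r \<subseteq> mtopology interior_of F n"
    using x openin_interior_of[of mtopology "F n"] unfolding openin_mtopology by blast
  ultimately show ?thesis
    using interior_of_subset[of mtopology "F n"] by blast
qed

locale fnormed_pair = V: fnormed_space NV + W: fnormed_space NW
  for NV :: "'a::real_vector \<Rightarrow> real" and NW :: "'b::real_vector \<Rightarrow> real"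
begin

lemma linear_continuous_map_iff:
  assumes "linear T"
  shows "continuous_map V.mtopology W.mtopology T \<longleftrightarrow> (\<forall>e>0. \<exists>d>0. \<forall>x. NV x < d \<longrightarrow> NW (T x) < e)"
  unfolding V.metric_continuous_map[OF W.Metric_space_axioms]
proof (intro iffI conjI allI impI; clarsimp?)
  fix e :: real assume "0 < e"
    and cont: "\<forall>a. \<forall>e>0. \<exists>d>0. \<forall>x. NV (a - x) < d \<longrightarrow> NW (T a - T x) < e"
  then have "\<exists>d>0. \<forall>x. NV (0 - x) < d \<longrightarrow> NW (T 0 - T x) < e"
    by blast
  then show "\<exists>d>0. \<forall>x. NV x < d \<longrightarrow> NW (T x) < e"
    using linear_0[OF assms] by simp
next
  fix a and e :: real assume "0 < e"
    and cont0: "\<forall>e>0. \<exists>d>0. \<forall>x. NV x < d \<longrightarrow> NW (T x) < e"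
  then obtain d where "0 < d" "\<And>x. NV x < d \<Longrightarrow> NW (T x) < e"
    by blast
  then show "\<exists>d>0. \<forall>x. NV (a - x) < d \<longrightarrow> NW (T a - T x) < e"
    by (metis linear_diff[OF assms])
qed

lemma closure_of_image_mball_diff:
  assumes lin: "linear T"
    and y: "y \<in> W.mtopology closure_of (T ` V.mball 0 r)"
    and y': "y' \<in> W.mtopology closure_of (T ` V.mball 0 r')"
  shows "y - y' \<in> W.mtopology closure_of (T ` V.mball 0 (r + r'))"
  unfolding W.metric_closure_of
proof (intro CollectI conjI allI impI)
  fix \<epsilon> :: real assume "0 < \<epsilon>"
  then obtain a a' where a: "NV a < r" "NW (y - T a) < \<epsilon> / 2"
    and a': "NV a' < r'" "NW (y' - T a') < \<epsilon> / 2"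
    using y y' unfolding W.metric_closure_of by (auto dest!: spec[of _ "\<epsilon> / 2"])
  have "NV (a - a') < r + r'"
    using V.N_triangle[of a "- a'"] a(1) a'(1) by simp
  moreover have "(y - y') - T (a - a') = (y - T a) + - (y' - T a')"
    by (simp add: linear_diff[OF lin] algebra_simps)
  then have "NW ((y - y') - T (a - a')) \<le> NW (y - T a) + NW (y' - T a')"
    using W.N_triangle[of "y - T a" "- (y' - T a')"] by (simp only: W.N_minus)
  then have "NW ((y - y') - T (a - a')) < \<epsilon>"
    using a(2) a'(2) by linarith
  ultimately show "\<exists>z\<in>T ` V.mball 0 (r + r'). z \<in> W.mball (y - y') \<epsilon>"
    by (intro bexI[of _ "T (a - a')"]) auto
qed simp

lemma Union_scaled_closure_of_image_mball:
  assumes lin: "linear T" and "surj T" and "0 < r"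
  shows "(\<Union>n. {y. y /\<^sub>R real (Suc n) \<in> W.mtopology closure_of (T ` V.mball 0 r)}) = UNIV"
proof -
  have "\<exists>n. y /\<^sub>R real (Suc n) \<in> W.mtopology closure_of (T ` V.mball 0 r)" for y
  proof -
    obtain x where y: "y = T x"
      using \<open>surj T\<close> by blast
    have "\<forall>\<^sub>F n in sequentially. NV (x /\<^sub>R real n) < r"
      using V.N_divideR_tendsto_0 \<open>0 < r\<close> by (rule order_tendstoD(2))
    then obtain N where "\<forall>n\<ge>N. NV (x /\<^sub>R real n) < r"
      unfolding eventually_sequentially by blast
    then have "NV (x /\<^sub>R real (Suc N)) < r"
      by (auto dest: spec[of _ "Suc N"])
    moreover have "y /\<^sub>R real (Suc N) = T (x /\<^sub>R real (Suc N))"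
      by (simp add: y linear_scale[OF lin])
    ultimately have "y /\<^sub>R real (Suc N) \<in> T ` V.mball 0 r"
      by simp
    then show ?thesis
      using closure_of_subset[of "T ` V.mball 0 r" W.mtopology] by auto
  qed
  then show ?thesis
    by blast
qed

lemma closure_of_image_mball_contains_ball:
  assumes "W.mcomplete" and lin: "linear T" and "surj T" and "0 < r"
  shows "\<exists>y0 \<delta>. 0 < \<delta> \<and> (\<forall>u. NW u < \<delta> \<longrightarrow> y0 + u \<in> W.mtopology closure_of (T ` V.mball 0 r))"
proof -
  define C where "C = W.mtopology closure_of (T ` V.mball 0 r)"
  define F where "F n = {y. y /\<^sub>R real (Suc n) \<in> C}" for n
  have "closedin W.mtopology {y \<in> topspace W.mtopology. y /\<^sub>R real (Suc n) \<in> C}" for n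
    by (rule closedin_continuous_map_preimage[OF W.continuous_map_scaleR])
      (auto simp: C_def inverse_le_1_iff)
  then have "closedin W.mtopology (F n)" for n
    by (simp add: F_def)
  moreover have "(\<Union>n. F n) = UNIV"
    using Union_scaled_closure_of_image_mball[OF lin \<open>surj T\<close> \<open>0 < r\<close>] by (simp add: F_def C_def)
  ultimately obtain n y1 \<rho> where "0 < \<rho>" and ball: "W.mball y1 \<rho> \<subseteq> F n"
    using W.Baire_exists_mball_subset[OF \<open>W.mcomplete\<close>] by blast
  define K where "K = real (Suc n)"
  have "y1 /\<^sub>R K + u \<in> C" if "NW u < \<rho> / K" for u
  proof -
    have "NW (K *\<^sub>R u) < \<rho>"
      using W.N_of_nat_scaleR_le[of "Suc n" u] that by (simp add: K_def field_simps)
    then have "y1 + K *\<^sub>R u \<in> F n"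
      using ball by auto
    moreover have "(y1 + K *\<^sub>R u) /\<^sub>R K = y1 /\<^sub>R K + u"
      by (simp add: K_def scaleR_add_right)
    ultimately show ?thesis
      by (simp add: F_def K_def)
  qed
  moreover have "0 < \<rho> / K"
    using \<open>0 < \<rho>\<close> by (simp add: K_def)
  ultimately show ?thesis
    unfolding C_def by blast
qed

lemma mball_subset_closure_of_image_mball:
  assumes "W.mcomplete" and lin: "linear T" and "surj T" and "0 < r"
  shows "\<exists>\<delta>>0. W.mball 0 \<delta> \<subseteq> W.mtopology closure_of (T ` V.mball 0 r)"
proof -
  obtain y0 \<delta> where "0 < \<delta>"
    and y0: "\<And>u. NW u < \<delta> \<Longrightarrow> y0 + u \<in> W.mtopology closure_of (T ` V.mball 0 (r / 2))"
    using closure_of_image_mball_contains_ball[OF assms(1-3), of "r / 2"] \<open>0 < r\<close> by auto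
  have "z \<in> W.mtopology closure_of (T ` V.mball 0 (r / 2 + r / 2))" if "NW z < \<delta>" for z
    using closure_of_image_mball_diff[OF lin y0[OF that] y0[of 0]] \<open>0 < \<delta>\<close> by simp
  then show ?thesis
    using \<open>0 < \<delta>\<close> by auto
qed

lemma successive_approximation:
  fixes \<rho> e :: "nat \<Rightarrow> real"
  assumes lin: "linear T"
    and step: "\<And>n z. NW z < e n \<Longrightarrow> \<exists>x. NV x < \<rho> n \<and> NW (z - T x) < e (Suc n)"
    and "NW y < e 0"
  shows "\<exists>s. s 0 = 0 \<and> (\<forall>n. NV (s (Suc n) - s n) < \<rho> n) \<and> (\<forall>n. NW (y - T (s n)) < e n)"
proof -
  define pick where "pick n z = (SOME x. NV x < \<rho> n \<and> NW (z - T x) < e (Suc n))" for n z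
  have pick: "NV (pick n z) < \<rho> n \<and> NW (z - T (pick n z)) < e (Suc n)" if "NW z < e n" for n z
    unfolding pick_def by (rule someI_ex) (rule step[OF that])
  define s where "s = rec_nat 0 (\<lambda>n s. s + pick n (y - T s))"
  have s_Suc: "s (Suc n) = s n + pick n (y - T (s n))" for n
    by (simp add: s_def)
  have residual: "NW (y - T (s n)) < e n" for n
  proof (induction n)
    case 0
    then show ?case using \<open>NW y < e 0\<close> linear_0[OF lin] by (simp add: s_def)
  next
    case (Suc n)
    then show ?case
      using pick[OF Suc] by (simp add: s_Suc linear_add[OF lin] diff_diff_eq)
  qed
  have "NV (s (Suc n) - s n) < \<rho> n" for n
    using pick[OF residual[of n]] by (simp add: s_Suc)
  with residual show ?thesis
    by (intro exI[of _ s]) (simp add: s_def)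
qed

lemma exists_preimage_if_closure_of_image_mballs:
  assumes "V.mcomplete" and lin: "linear T" and cont: "continuous_map V.mtopology W.mtopology T"
    and "\<rho> sums R" and \<delta>_pos: "\<And>n. 0 < \<delta> n"
    and \<delta>: "\<And>n. W.mball 0 (\<delta> n) \<subseteq> W.mtopology closure_of (T ` V.mball 0 (\<rho> n))"
    and y: "NW y < min (\<delta> 0) 1"
  shows "\<exists>x. NV x \<le> R \<and> T x = y"
proof -
  define e where "e n = min (\<delta> n) (inverse (real (Suc n)))" for n
    \<comment> \<open>the second bound makes the residuals \<open>y - T (s n)\<close> tend to 0\<close>
  have step: "\<exists>x. NV x < \<rho> n \<and> NW (z - T x) < e (Suc n)" if "NW z < e n" for n z
  proof -
    have "z \<in> W.mtopology closure_of (T ` V.mball 0 (\<rho> n))"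
      using \<delta>[of n] that by (auto simp: e_def)
    moreover have "0 < e (Suc n)"
      using \<delta>_pos by (simp add: e_def)
    ultimately show ?thesis
      unfolding W.metric_closure_of by auto
  qed
  have "NW y < e 0"
    using y by (simp add: e_def)
  then obtain s where "s 0 = 0" and steps: "\<And>n. NV (s (Suc n) - s n) < \<rho> n"
    and residual: "\<And>n. NW (y - T (s n)) < e n"
    using successive_approximation[where e = e and \<rho> = \<rho>, OF lin step] by blast
  obtain x where lim: "limitin V.mtopology s x sequentially" and "NV x \<le> R"
    using V.limitin_if_steps_sums[OF \<open>V.mcomplete\<close> \<open>s 0 = 0\<close> less_imp_le[OF steps] \<open>\<rho> sums R\<close>]
    by blast
  have "limitin W.mtopology (T \<circ> s) (T x) sequentially"
    using cont lim by (rule continuous_map_limit)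
  moreover have "limitin W.mtopology (T \<circ> s) y sequentially"
    using residual by (intro W.limitin_if_N_diff_less_inverse) (simp add: e_def)
  ultimately have "T x = y"
    by (rule W.limitin_metric_unique) simp
  with \<open>NV x \<le> R\<close> show ?thesis
    by blast
qed

lemma mball_subset_image_mball:
  assumes "V.mcomplete" and "W.mcomplete" and lin: "linear T" and "surj T"
    and cont: "continuous_map V.mtopology W.mtopology T" and "0 < r"
  shows "\<exists>\<delta>>0. W.mball 0 \<delta> \<subseteq> T ` V.mball 0 r"
proof -
  define \<rho> where "\<rho> n = r / 4 * (1 / 2) ^ n" for n
  have "\<rho> sums (r / 4 * (1 / (1 - 1 / 2)))"
    unfolding \<rho>_def by (intro sums_mult geometric_sums) simp
  then have \<rho>_sums: "\<rho> sums (r / 2)"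
    by simp
  have "0 < \<rho> n" for n
    using \<open>0 < r\<close> by (simp add: \<rho>_def)
  then have "\<forall>n. \<exists>\<delta>>0. W.mball 0 \<delta> \<subseteq> W.mtopology closure_of (T ` V.mball 0 (\<rho> n))"
    using mball_subset_closure_of_image_mball[OF \<open>W.mcomplete\<close> lin \<open>surj T\<close>] by blast
  then obtain \<delta> where \<delta>_pos: "\<And>n. 0 < \<delta> n"
    and \<delta>: "\<And>n. W.mball 0 (\<delta> n) \<subseteq> W.mtopology closure_of (T ` V.mball 0 (\<rho> n))"
    by (auto dest!: choice)
  have "y \<in> T ` V.mball 0 r" if "NW y < min (\<delta> 0) 1" for y
    using exists_preimage_if_closure_of_image_mballs[OF \<open>V.mcomplete\<close> lin cont \<rho>_sums \<delta>_pos \<delta> that]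
      \<open>0 < r\<close> by force
  moreover have "0 < min (\<delta> 0) 1"
    using \<delta>_pos by simp
  ultimately show ?thesis
    by (intro exI[of _ "min (\<delta> 0) 1"]) auto
qed

theorem continuous_map_inv:
  assumes "V.mcomplete" and "W.mcomplete" and lin: "linear T" and "bij T"
    and cont: "continuous_map V.mtopology W.mtopology T"
  shows "continuous_map W.mtopology V.mtopology (inv T)"
proof -
  interpret WV: fnormed_pair NW NV
    by (simp add: fnormed_pair_def V.fnormed_space_axioms W.fnormed_space_axioms)
  have "\<exists>d>0. \<forall>y. NW y < d \<longrightarrow> NV (inv T y) < e" if e: "0 < e" for e
  proof -
    obtain d where "0 < d" and d: "W.mball 0 d \<subseteq> T ` V.mball 0 e"
      using mball_subset_image_mball[OF assms(1,2) lin bij_is_surj[OF \<open>bij T\<close>] cont e]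
      by blast
    have "NV (inv T y) < e" if "NW y < d" for y
      using d that bij_is_inj[OF \<open>bij T\<close>] by auto
    with \<open>0 < d\<close> show ?thesis
      by blast
  qed
  then show ?thesis
    using WV.linear_continuous_map_iff[OF linear_inv[OF lin \<open>bij T\<close>]] by simp
qed

end

section \<open>PN-spaces as F-normed spaces\<close>

lemma ddf_bounds:
  assumes "ddf F"
  shows "0 \<le> F x" and "F x \<le> 1"
  using assms unfolding ddf_def by auto

lemma ddf_mono:
  assumes "ddf F" and "x \<le> y"
  shows "F x \<le> F y"
  using assms unfolding ddf_def mono_def by auto

lemma ddf_nonpos:
  assumes "ddf F" and "t \<le> 0"
  shows "F (ereal t) = 0"
proof -
  have "F (ereal t) \<le> F 0"
    using ddf_mono[OF assms(1)] assms(2) by (simp add: zero_ereal_def)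
  then show ?thesis
    using assms(1) ddf_bounds(1)[OF assms(1), of "ereal t"] unfolding ddf_def by auto
qed

definition fnorm :: "('a::real_vector \<Rightarrow> ereal \<Rightarrow> real) \<Rightarrow> 'a \<Rightarrow> real" where
  "fnorm \<nu> x = Inf {t. 0 < t \<and> 1 - t < \<nu> x (ereal t)}"

locale pn_space =
  fixes \<nu> :: "'a::real_vector \<Rightarrow> ereal \<Rightarrow> real"
  assumes PN_space: "PN_space \<nu>"
begin

lemma ddf_nu: "ddf (\<nu> p)"
  using PN_space unfolding PN_space_def by auto

lemma nu_eq_H0_iff: "\<nu> p = H0 \<longleftrightarrow> p = 0"
  using PN_space unfolding PN_space_def by auto

lemma tauM_le_nu_add: "tauM (\<nu> p) (\<nu> q) x \<le> \<nu> (p + q) (ereal x)"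
  using PN_space unfolding PN_space_def by auto

lemma nu_scaleR:
  assumes "c \<noteq> 0" and "0 \<le> t"
  shows "\<nu> (c *\<^sub>R p) (ereal t) = \<nu> p (ereal (t / \<bar>c\<bar>))"
  using PN_space assms unfolding PN_space_def by auto

lemma fnorm_set_nonempty: "{t. 0 < t \<and> 1 - t < \<nu> x (ereal t)} \<noteq> {}"
proof -
  have "2 \<in> {t. 0 < t \<and> 1 - t < \<nu> x (ereal t)}"
    using ddf_bounds(1)[OF ddf_nu, of x "ereal 2"] by auto
  then show ?thesis
    by blast
qed

lemma fnorm_nonneg: "0 \<le> fnorm \<nu> x"
  unfolding fnorm_def by (rule cInf_greatest) (use fnorm_set_nonempty in auto)

lemma fnorm_less_imp:
  assumes "fnorm \<nu> x < t"
  shows "1 - t < \<nu> x (ereal t)"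
proof -
  obtain s where s: "0 < s" "1 - s < \<nu> x (ereal s)" "s < t"
    using cInf_lessD[OF _ assms[unfolded fnorm_def]] fnorm_set_nonempty by blast
  moreover have "\<nu> x (ereal s) \<le> \<nu> x (ereal t)"
    using ddf_mono[OF ddf_nu] s(3) by simp
  ultimately show ?thesis
    by simp
qed

lemma fnorm_le:
  assumes "0 < t" and "1 - t < \<nu> x (ereal t)"
  shows "fnorm \<nu> x \<le> t"
  unfolding fnorm_def by (rule cInf_lower) (use assms in \<open>auto intro: bdd_belowI[of _ 0]\<close>)

lemma fnorm_0 [simp]: "fnorm \<nu> 0 = 0"
proof -
  have "fnorm \<nu> 0 \<le> t" if "0 < t" for t
    using that nu_eq_H0_iff[of 0] by (intro fnorm_le) (auto simp: H0_def)
  then show ?thesis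
    using fnorm_nonneg[of 0] by (meson dense_ge order.antisym)
qed

lemma fnorm_eq_0_imp:
  assumes "fnorm \<nu> x = 0"
  shows "x = 0"
proof -
  have ge_1: "1 \<le> \<nu> x (ereal r)" if "0 < r" for r
  proof (rule field_le_epsilon)
    fix e :: real assume "0 < e"
    then have "1 - min r e < \<nu> x (ereal (min r e))"
      using assms \<open>0 < r\<close> by (intro fnorm_less_imp) simp
    moreover have "\<nu> x (ereal (min r e)) \<le> \<nu> x (ereal r)"
      using ddf_mono[OF ddf_nu] by simp
    ultimately show "1 \<le> \<nu> x (ereal r) + e"
      by linarith
  qed
  have "\<nu> x (ereal r) = H0 (ereal r)" for r
    using ge_1[of r] ddf_bounds(2)[OF ddf_nu, of x "ereal r"] ddf_nonpos[OF ddf_nu, of r x]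
    by (cases "0 < r") (auto simp: H0_def)
  moreover have "\<nu> x \<infinity> = H0 \<infinity>" and "\<nu> x (-\<infinity>) = H0 (-\<infinity>)"
    using ddf_nu[of x] by (auto simp: ddf_def H0_def)
  ultimately have "\<nu> x y = H0 y" for y
    by (cases y) simp_all
  then have "\<nu> x = H0"
    by (rule ext)
  then show ?thesis
    using nu_eq_H0_iff by simp
qed

lemma fnorm_triangle: "fnorm \<nu> (x + y) \<le> fnorm \<nu> x + fnorm \<nu> y"
proof (rule field_le_epsilon)
  fix e :: real assume "0 < e"
  define s where "s = fnorm \<nu> x + e / 2"
  define t where "t = fnorm \<nu> y + e / 2"
  have "0 < s" "0 < t"
    using \<open>0 < e\<close> fnorm_nonneg[of x] fnorm_nonneg[of y] by (auto simp: s_def t_def)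
  have "1 - s < \<nu> x (ereal s)" "1 - t < \<nu> y (ereal t)"
    using \<open>0 < e\<close> by (auto simp: s_def t_def intro!: fnorm_less_imp)
  moreover have "min (\<nu> x (ereal s)) (\<nu> y (ereal (s + t - s))) \<le> tauM (\<nu> x) (\<nu> y) (s + t)"
    unfolding tauM_def
    by (rule cSUP_upper) (auto intro!: bdd_aboveI[of _ 1] simp: min_le_iff_disj ddf_bounds(2)[OF ddf_nu])
  moreover have "tauM (\<nu> x) (\<nu> y) (s + t) \<le> \<nu> (x + y) (ereal (s + t))"
    by (rule tauM_le_nu_add)
  ultimately have "1 - (s + t) < \<nu> (x + y) (ereal (s + t))"
    using \<open>0 < s\<close> \<open>0 < t\<close> by auto
  then have "fnorm \<nu> (x + y) \<le> s + t"
    using \<open>0 < s\<close> \<open>0 < t\<close> by (intro fnorm_le) auto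
  then show "fnorm \<nu> (x + y) \<le> fnorm \<nu> x + fnorm \<nu> y + e"
    by (simp add: s_def t_def)
qed

lemma fnorm_scaleR_le:
  assumes "\<bar>c\<bar> \<le> 1"
  shows "fnorm \<nu> (c *\<^sub>R x) \<le> fnorm \<nu> x"
proof (cases "c = 0")
  case True
  then show ?thesis
    using fnorm_nonneg by simp
next
  case False
  show ?thesis
  proof (rule dense_ge)
    fix t assume t: "fnorm \<nu> x < t"
    then have "0 < t"
      using fnorm_nonneg[of x] by linarith
    have "\<nu> x (ereal t) \<le> \<nu> x (ereal (t / \<bar>c\<bar>))"
      using ddf_mono[OF ddf_nu] assms False \<open>0 < t\<close> by (simp add: le_divide_eq)
    then have "1 - t < \<nu> (c *\<^sub>R x) (ereal t)"
      using fnorm_less_imp[OF t] nu_scaleR[OF False] \<open>0 < t\<close> by simp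
    then show "fnorm \<nu> (c *\<^sub>R x) \<le> t"
      using \<open>0 < t\<close> by (rule fnorm_le[rotated])
  qed
qed

lemma fnorm_minus: "fnorm \<nu> (- x) = fnorm \<nu> x"
  using fnorm_scaleR_le[of "-1" x] fnorm_scaleR_le[of "-1" "- x"] by simp

end

sublocale pn_space \<subseteq> Metric_space UNIV "\<lambda>x y. fnorm \<nu> (x - y)"
proof
  show "fnorm \<nu> (x - y) = fnorm \<nu> (y - x)" for x y
    using fnorm_minus[of "x - y"] by simp
  show "fnorm \<nu> (x - z) \<le> fnorm \<nu> (x - y) + fnorm \<nu> (y - z)" for x y z
    using fnorm_triangle[of "x - y" "y - z"] by simp
  show "fnorm \<nu> (x - y) = 0 \<longleftrightarrow> x = y" for x y
    using fnorm_eq_0_imp[of "x - y"] by auto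
qed (rule fnorm_nonneg)

context pn_space
begin

lemma strong_top_eq_mtopology: "strong_top \<nu> = mtopology"
proof -
  have "(\<exists>t>0. strong_nbhd \<nu> p t \<subseteq> U) \<longleftrightarrow> (\<exists>r>0. mball p r \<subseteq> U)" for p U
  proof
    assume "\<exists>t>0. strong_nbhd \<nu> p t \<subseteq> U"
    moreover have "mball p t \<subseteq> strong_nbhd \<nu> p t" for t
      using fnorm_less_imp by (auto simp: strong_nbhd_def)
    ultimately show "\<exists>r>0. mball p r \<subseteq> U"
      by blast
  next
    assume "\<exists>r>0. mball p r \<subseteq> U"
    then obtain r where "0 < r" "mball p r \<subseteq> U"
      by blast
    moreover have "q \<in> mball p r" if "q \<in> strong_nbhd \<nu> p (r / 2)" for q
    proof -
      have "fnorm \<nu> (p - q) \<le> r / 2"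
        using that \<open>0 < r\<close> by (intro fnorm_le) (simp_all add: strong_nbhd_def)
      then show ?thesis
        using \<open>0 < r\<close> by simp
    qed
    ultimately show "\<exists>t>0. strong_nbhd \<nu> p t \<subseteq> U"
      by (intro exI[of _ "r / 2"]) auto
  qed
  then have "(\<lambda>U. \<forall>p\<in>U. \<exists>t>0. strong_nbhd \<nu> p t \<subseteq> U) = openin mtopology"
    by (auto simp: openin_mtopology fun_eq_iff)
  then show ?thesis
    unfolding strong_top_def by (simp add: openin_inverse)
qed

lemma MCauchy_imp_strong_Cauchy:
  assumes "MCauchy \<sigma>"
  shows "strong_Cauchy \<nu> \<sigma>"
  unfolding strong_Cauchy_def
proof (intro allI impI)
  fix t :: real assume "0 < t"
  then have "\<exists>M. \<forall>n m. M \<le> n \<longrightarrow> M \<le> m \<longrightarrow> fnorm \<nu> (\<sigma> n - \<sigma> m) < t"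
    using assms unfolding MCauchy_def by simp
  then obtain M where M: "\<forall>n m. M \<le> n \<longrightarrow> M \<le> m \<longrightarrow> fnorm \<nu> (\<sigma> n - \<sigma> m) < t"
    by blast
  have "1 - t < \<nu> (\<sigma> n - \<sigma> m) (ereal t)" if "M < m" "M < n" for m n
    using M that by (intro fnorm_less_imp) simp
  then show "\<exists>M. \<forall>m>M. \<forall>n>M. 1 - t < \<nu> (\<sigma> n - \<sigma> m) (ereal t)"
    by blast
qed

lemma strong_conv_imp_limitin:
  assumes "strong_conv \<nu> \<sigma> p"
  shows "limitin mtopology \<sigma> p sequentially"
proof -
  have "\<forall>\<^sub>F n in sequentially. fnorm \<nu> (\<sigma> n - p) < \<epsilon>" if "0 < \<epsilon>" for \<epsilon>
  proof -
    have "0 < \<epsilon> / 2"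
      using that by simp
    then obtain M where "\<forall>n\<ge>M. \<sigma> n \<in> strong_nbhd \<nu> p (\<epsilon> / 2)"
      using assms unfolding strong_conv_def by blast
    then have M: "\<And>n. M \<le> n \<Longrightarrow> 1 - \<epsilon> / 2 < \<nu> (p - \<sigma> n) (ereal (\<epsilon> / 2))"
      by (simp add: strong_nbhd_def)
    have "fnorm \<nu> (\<sigma> n - p) < \<epsilon>" if "M \<le> n" for n
    proof -
      have "fnorm \<nu> (p - \<sigma> n) \<le> \<epsilon> / 2"
        using \<open>0 < \<epsilon> / 2\<close> M[OF that] by (rule fnorm_le)
      moreover have "fnorm \<nu> (\<sigma> n - p) = fnorm \<nu> (p - \<sigma> n)"
        by (rule commute)
      ultimately show ?thesis
        using \<open>0 < \<epsilon>\<close> by linarith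
    qed
    then show ?thesis
      unfolding eventually_sequentially by blast
  qed
  then show ?thesis
    by (simp add: limitin_metric)
qed

lemma strongly_complete_imp_mcomplete:
  assumes "strongly_complete \<nu>"
  shows "mcomplete"
  using assms MCauchy_imp_strong_Cauchy strong_conv_imp_limitin
  unfolding mcomplete_def strongly_complete_def by blast

end

lemma fnorm_divideR_tendsto_0:
  assumes "proper_PN_space \<nu>"
  shows "(\<lambda>n. fnorm \<nu> (x /\<^sub>R real n)) \<longlonglongrightarrow> 0"
proof (rule order_tendstoI)
  interpret pn_space \<nu>
    using assms by (simp add: pn_space_def proper_PN_space_def)
  show "\<forall>\<^sub>F n in sequentially. e < fnorm \<nu> (x /\<^sub>R real n)" if "e < 0" for e
    using that fnorm_nonneg by (simp add: order_less_le_trans)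
  fix e :: real assume "0 < e"
  define t where "t = e / 2"
  have "0 < t" "t < e"
    using \<open>0 < e\<close> by (simp_all add: t_def)
  have "((\<lambda>s. \<nu> x (ereal s)) \<longlongrightarrow> 1) at_top"
    using assms unfolding proper_PN_space_def proper_ddf_def by auto
  then have "\<forall>\<^sub>F s in at_top. 1 - t < \<nu> x (ereal s)"
    using \<open>0 < t\<close> by (intro order_tendstoD(1)) auto
  then obtain S where S: "\<And>s. S \<le> s \<Longrightarrow> 1 - t < \<nu> x (ereal s)"
    unfolding eventually_at_top_linorder by blast
  obtain k :: nat where "S / t \<le> real k"
    using real_arch_simple by blast
  have "fnorm \<nu> (x /\<^sub>R real n) < e" if "Suc k \<le> n" for n
  proof -
    have "S \<le> t * real k"
      using \<open>S / t \<le> real k\<close> \<open>0 < t\<close> by (simp add: divide_le_eq mult.commute)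
    also have "\<dots> \<le> t * real n"
      using \<open>0 < t\<close> that by simp
    finally have "S \<le> t * real n" .
    then have "1 - t < \<nu> (x /\<^sub>R real n) (ereal t)"
      using S[of "t * real n"] nu_scaleR[of "inverse (real n)" t x] \<open>0 < t\<close> that
      by (simp add: divide_inverse)
    then have "fnorm \<nu> (x /\<^sub>R real n) \<le> t"
      by (rule fnorm_le[OF \<open>0 < t\<close>])
    then show ?thesis
      using \<open>t < e\<close> by simp
  qed
  then show "\<forall>\<^sub>F n in sequentially. fnorm \<nu> (x /\<^sub>R real n) < e"
    unfolding eventually_sequentially by blast
qed

lemma fnormed_space_fnorm:
  assumes "proper_PN_space \<nu>"
  shows "fnormed_space (fnorm \<nu>)"
proof -
  interpret pn_space \<nu>
    using assms by (simp add: pn_space_def proper_PN_space_def)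
  show ?thesis
    using fnorm_nonneg fnorm_eq_0_imp fnorm_triangle fnorm_scaleR_le fnorm_divideR_tendsto_0[OF assms]
    by unfold_locales auto
qed

theorem corollary4p6:
  fixes \<nu> :: "'a::real_vector \<Rightarrow> ereal \<Rightarrow> real"
    and \<mu> :: "'b::real_vector \<Rightarrow> ereal \<Rightarrow> real"
    and T :: "'a \<Rightarrow> 'b"
  assumes "proper_PN_space \<nu>" and "proper_PN_space \<mu>"
    and "strongly_complete \<nu>" and "strongly_complete \<mu>"
    and "T \<in> bounded_ops \<nu> \<mu>" and "bij T"
  shows "inv T \<in> bounded_ops \<mu> \<nu>"
proof -
  interpret V: pn_space \<nu>
    using assms(1) by (simp add: pn_space_def proper_PN_space_def)
  interpret W: pn_space \<mu>
    using assms(2) by (simp add: pn_space_def proper_PN_space_def)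
  have pair: "fnormed_pair (fnorm \<nu>) (fnorm \<mu>)"
    using assms(1,2) by (simp add: fnormed_pair_def fnormed_space_fnorm)
  have "linear T" and "continuous_map V.mtopology W.mtopology T"
    using assms(5) by (simp_all add: bounded_ops_def V.strong_top_eq_mtopology W.strong_top_eq_mtopology)
  then have "continuous_map W.mtopology V.mtopology (inv T)"
    using fnormed_pair.continuous_map_inv[OF pair] assms(6)
      V.strongly_complete_imp_mcomplete[OF assms(3)] W.strongly_complete_imp_mcomplete[OF assms(4)]
    by blast
  then show ?thesis
    using linear_inv[OF \<open>linear T\<close> assms(6)]
    by (simp add: bounded_ops_def V.strong_top_eq_mtopology W.strong_top_eq_mtopology)
qed

end
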